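(* Let $\mathcal{S}\subset\mathbb{R}^n$ be compact convex with $\|x\|\le D$ for all $x\in\mathcal{S}$, and let $f_1,\dots,f_T:\mathcal{S}\to\mathbb{R}$ be differentiable and $\ell$-strongly convex with $\|\nabla f_t(x)\|\le G$ on $\mathcal{S}$. Let $\gamma\in(0,1)$, $\theta_1\in\mathcal{S}$ and $$\theta_{t+1}=\operatorname{argmin}_{\theta\in\mathcal{S}}\|\theta-(\theta_t-\eta_t\nabla f_t(\theta_t))\|^2,\qquad\eta_t=\frac{1-\gamma}{\ell(1-\gamma^t)}.$$ Then for all $z_1,\dots,z_T\in\mathcal{S}$ with $\sum_{t=2}^T\|z_t-z_{t-1}\|\le V$, $$\sum_{t=1}^T\big(f_t(\theta_t)-f_t(z_t)\big)\le\frac{2D\ell}{1-\gamma}V+\frac{G^2}{2}\sum_{t=1}^T\eta_t.$$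
   Context: $\ell$-strongly convex: $f(y)\ge f(x)+\nabla f(x)^\top(y-x)+\frac\ell2\|x-y\|^2$ for all $x,y\in\mathcal{S}$. *)

theory Defs
  imports "HOL-Analysis.Analysis"
begin

definition strongly_convex_grad_on ::
  "'a::euclidean_space set \<Rightarrow> real \<Rightarrow> ('a \<Rightarrow> real) \<Rightarrow> ('a \<Rightarrow> 'a) \<Rightarrow> bool" where
  "strongly_convex_grad_on S l f grad \<longleftrightarrow>
     (\<forall>x\<in>S. \<forall>y\<in>S. f y \<ge> f x + grad x \<bullet> (y - x) + l / 2 * (norm (x - y))\<^sup>2)"

end

theory Submission
  imports Defs
begin

text \<open>With \<open>a\<^sub>t = \<ell>(1 - \<gamma>\<^sup>t)/(1 - \<gamma>)\<close> we have \<open>\<eta>\<^sub>t = 1/a\<^sub>t\<close>, \<open>a\<^sub>0 = 0\<close> and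
  \<open>a\<^sub>t = \<ell> + \<gamma> a\<^sub>t\<^sub>-\<^sub>1 \<le> \<ell>/(1 - \<gamma>)\<close>. Strong convexity, expanding the gradient step and
  non-expansiveness of the projection give in round \<open>t\<close>
  \<open>2(f\<^sub>t(\<theta>\<^sub>t) - f\<^sub>t(z\<^sub>t)) \<le> (a\<^sub>t - \<ell>)|\<theta>\<^sub>t - z\<^sub>t|\<^sup>2 - a\<^sub>t|\<theta>\<^sub>t\<^sub>+\<^sub>1 - z\<^sub>t|\<^sup>2 + \<eta>\<^sub>t G\<^sup>2\<close>.
  As \<open>a\<^sub>t - \<ell> = \<gamma> a\<^sub>t\<^sub>-\<^sub>1 \<le> a\<^sub>t\<^sub>-\<^sub>1\<close>, and moving the comparator from \<open>z\<^sub>t\<close> to \<open>z\<^sub>t\<^sub>-\<^sub>1\<close>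
  changes \<open>|\<theta>\<^sub>t - \<cdot>|\<^sup>2\<close> by at most \<open>4D|z\<^sub>t - z\<^sub>t\<^sub>-\<^sub>1|\<close>, the potential \<open>a\<^sub>t\<^sub>-\<^sub>1|\<theta>\<^sub>t - z\<^sub>t\<^sub>-\<^sub>1|\<^sup>2\<close>
  telescopes and only the path-length and step-size terms remain.\<close>

definition ogd_weight :: "real \<Rightarrow> real \<Rightarrow> nat \<Rightarrow> real" where
  "ogd_weight l \<gamma> t = l * (1 - \<gamma> ^ t) / (1 - \<gamma>)"

lemma ogd_weight_0 [simp]: "ogd_weight l \<gamma> 0 = 0"
  by (simp add: ogd_weight_def)

lemma ogd_weight_Suc:
  assumes "\<gamma> \<noteq> 1"
  shows "ogd_weight l \<gamma> (Suc t) = l + \<gamma> * ogd_weight l \<gamma> t"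
  using assms by (simp add: ogd_weight_def field_simps)

lemma ogd_weight_nonneg:
  assumes "0 \<le> l" "0 \<le> \<gamma>" "\<gamma> < 1"
  shows "0 \<le> ogd_weight l \<gamma> t"
  using assms by (simp add: ogd_weight_def power_le_one)

lemma ogd_weight_le:
  assumes "0 \<le> l" "0 \<le> \<gamma>" "\<gamma> < 1"
  shows "ogd_weight l \<gamma> t \<le> l / (1 - \<gamma>)"
  using assms by (simp add: ogd_weight_def divide_right_mono mult_left_le)

lemma projection_sq_dist_le:
  fixes S :: "'a::euclidean_space set"
  assumes "convex S" "closed S" "p \<in> S" "y \<in> S"
    and nearest: "\<forall>w\<in>S. (norm (p - x))\<^sup>2 \<le> (norm (w - x))\<^sup>2"
  shows "(norm (p - y))\<^sup>2 \<le> (norm (x - y))\<^sup>2"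
proof -
  have "\<forall>w\<in>S. dist x p \<le> dist x w"
  proof
    fix w
    assume "w \<in> S"
    then have "norm (p - x) \<le> norm (w - x)"
      using nearest power2_le_imp_le[OF _ norm_ge_zero] by blast
    then show "dist x p \<le> dist x w"
      by (simp add: dist_norm norm_minus_commute)
  qed
  then have "p = closest_point S x"
    by (rule closest_point_unique[OF assms(1-3)])
  then have "dist p y \<le> dist x y"
    using closest_point_lipschitz[OF assms(1,2), of x y] closest_point_self[OF \<open>y \<in> S\<close>] assms(3)
    by auto
  then show ?thesis
    by (simp add: dist_norm power_mono)
qed

lemma strongly_convex_gradient_step:
  fixes x z g :: "'a::real_inner"
  assumes sc: "f x + g \<bullet> (z - x) + l / 2 * (norm (x - z))\<^sup>2 \<le> f z"
    and "0 < a"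
  shows "2 * (f x - f z)
           \<le> (a - l) * (norm (x - z))\<^sup>2 - a * (norm (x - (1 / a) *\<^sub>R g - z))\<^sup>2 + (norm g)\<^sup>2 / a"
proof -
  have "x - (1 / a) *\<^sub>R g - z = (x - z) - (1 / a) *\<^sub>R g"
    by simp
  then have expand: "(norm (x - (1 / a) *\<^sub>R g - z))\<^sup>2
      = (norm (x - z))\<^sup>2 - 2 * (1 / a) * (g \<bullet> (x - z)) + (1 / a)\<^sup>2 * (norm g)\<^sup>2"
    unfolding power2_norm_eq_inner
    by (simp add: inner_diff_left inner_diff_right inner_commute power2_eq_square algebra_simps)
  have "a * (norm (x - (1 / a) *\<^sub>R g - z))\<^sup>2
          = a * (norm (x - z))\<^sup>2 - 2 * (g \<bullet> (x - z)) + (norm g)\<^sup>2 / a"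
    unfolding expand using \<open>0 < a\<close> by (simp add: field_simps power2_eq_square)
  moreover have "g \<bullet> (z - x) = - (g \<bullet> (x - z))"
    by (simp add: inner_diff_right)
  ultimately show ?thesis
    using sc by (simp add: algebra_simps)
qed

lemma sq_norm_diff_le_drift:
  fixes x z z' :: "'a::real_normed_vector"
  assumes "norm x \<le> D" "norm z \<le> D" "norm z' \<le> D"
  shows "(norm (x - z))\<^sup>2 \<le> (norm (x - z'))\<^sup>2 + 4 * D * norm (z - z')"
proof -
  have "(norm (x - z))\<^sup>2 - (norm (x - z'))\<^sup>2
          = (norm (x - z) + norm (x - z')) * (norm (x - z) - norm (x - z'))"
    by (simp add: power2_eq_square algebra_simps)
  also have "\<dots> \<le> (norm (x - z) + norm (x - z')) * norm (z - z')"
    using norm_triangle_ineq2[of "x - z" "x - z'"]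
    by (intro mult_left_mono) (auto simp: norm_minus_commute)
  also have "\<dots> \<le> 4 * D * norm (z - z')"
    using assms norm_triangle_ineq4[of x z] norm_triangle_ineq4[of x z']
    by (intro mult_right_mono) auto
  finally show ?thesis by simp
qed

lemma ogd_round_bound:
  fixes S :: "'a::euclidean_space set"
  assumes sc: "strongly_convex_grad_on S l f grad"
    and in_S: "x \<in> S" "z \<in> S" "z' \<in> S"
    and bounded: "\<forall>y\<in>S. norm y \<le> D" "\<forall>y\<in>S. norm (grad y) \<le> G"
    and weights: "a = l + \<gamma> * b" "0 < l" "0 \<le> \<gamma>" "\<gamma> \<le> 1" "0 \<le> b" "b \<le> B"
  shows "2 * (f x - f z) \<le> b * (norm (x - z'))\<^sup>2 - a * (norm (x - (1 / a) *\<^sub>R grad x - z))\<^sup>2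
                            + (4 * D * B * norm (z - z') + G\<^sup>2 / a)"
proof -
  have "0 < a"
    using weights by (simp add: add_pos_nonneg)
  have "0 \<le> D"
    using bounded(1) in_S(1) norm_ge_zero order_trans by blast
  have "(a - l) * (norm (x - z))\<^sup>2 \<le> b * (norm (x - z))\<^sup>2"
    using weights by (intro mult_right_mono) (auto simp: mult_left_le_one_le)
  also have "\<dots> \<le> b * (norm (x - z'))\<^sup>2 + b * (4 * D * norm (z - z'))"
    using sq_norm_diff_le_drift[of x D z z'] bounded(1) in_S \<open>0 \<le> b\<close>
    by (simp add: distrib_left[symmetric] mult_left_mono)
  also have "b * (4 * D * norm (z - z')) \<le> 4 * D * B * norm (z - z')"
    using mult_right_mono[OF \<open>b \<le> B\<close>, of "4 * D * norm (z - z')"] \<open>0 \<le> D\<close>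
    by (simp add: mult_ac)
  finally have drift: "(a - l) * (norm (x - z))\<^sup>2 \<le> b * (norm (x - z'))\<^sup>2 + 4 * D * B * norm (z - z')"
    by simp
  have "(norm (grad x))\<^sup>2 / a \<le> G\<^sup>2 / a"
    using bounded(2) in_S(1) \<open>0 < a\<close> by (simp add: divide_right_mono power_mono)
  moreover have "f x + grad x \<bullet> (z - x) + l / 2 * (norm (x - z))\<^sup>2 \<le> f z"
    using sc in_S unfolding strongly_convex_grad_on_def by blast
  ultimately show ?thesis
    using strongly_convex_gradient_step[of f x "grad x" z l a] \<open>0 < a\<close> drift by linarith
qed

lemma sum_le_by_potential:
  fixes r \<Psi> Q c :: "nat \<Rightarrow> real"
  assumes round: "\<And>t. t \<in> {1..T} \<Longrightarrow> r t \<le> \<Psi> t - Q t + c t"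
    and link: "\<And>t. t \<in> {1..<T} \<Longrightarrow> \<Psi> (Suc t) \<le> Q t"
    and "\<Psi> 1 = 0" "0 \<le> Q T"
  shows "(\<Sum>t=1..T. r t) \<le> (\<Sum>t=1..T. c t)"
proof (cases "T = 0")
  case False
  have partial: "(\<Sum>t=1..n. r t) \<le> (\<Sum>t=1..n. c t) - Q n" if "1 \<le> n" "n \<le> T" for n
    using that
  proof (induction n)
    case (Suc n)
    show ?case
    proof (cases "n = 0")
      case True
      then show ?thesis using round[of 1] \<open>\<Psi> 1 = 0\<close> Suc.prems by simp
    next
      case False
      then show ?thesis
        using Suc round[of "Suc n"] link[of n] by simp
    qed
  qed simp
  have "(\<Sum>t=1..T. r t) \<le> (\<Sum>t=1..T. c t) - Q T"
    using False by (intro partial) auto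
  then show ?thesis
    using \<open>0 \<le> Q T\<close> by linarith
qed simp

locale ogd_setting =
  fixes S :: "'a::euclidean_space set"
    and f :: "nat \<Rightarrow> 'a \<Rightarrow> real"
    and grad :: "nat \<Rightarrow> 'a \<Rightarrow> 'a"
    and \<theta> z :: "nat \<Rightarrow> 'a"
    and T :: nat
    and D G l \<gamma> :: real
    and \<eta> :: "nat \<Rightarrow> real"
  assumes S_closed: "closed S"
    and S_convex: "convex S"
    and S_bounded: "\<forall>x\<in>S. norm x \<le> D"
    and l_pos: "l > 0"
    and f_sc: "\<forall>t\<in>{1..T}. strongly_convex_grad_on S l (f t) (grad t)"
    and grad_bound: "\<forall>t\<in>{1..T}. \<forall>x\<in>S. norm (grad t x) \<le> G"
    and \<gamma>_range: "0 < \<gamma>" "\<gamma> < 1"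
    and \<eta>_def: "\<forall>t. \<eta> t = (1 - \<gamma>) / (l * (1 - \<gamma> ^ t))"
    and \<theta>1: "\<theta> 1 \<in> S"
    and \<theta>_step: "\<forall>t\<in>{1..<T}. \<theta> (t + 1) \<in> S \<and>
        (\<forall>y\<in>S. (norm (\<theta> (t + 1) - (\<theta> t - \<eta> t *\<^sub>R grad t (\<theta> t))))\<^sup>2
                \<le> (norm (y - (\<theta> t - \<eta> t *\<^sub>R grad t (\<theta> t))))\<^sup>2)"
    and z_in: "\<forall>t\<in>{1..T}. z t \<in> S"
begin

abbreviation a :: "nat \<Rightarrow> real" where
  "a \<equiv> ogd_weight l \<gamma>"

text \<open>In round 1 the previous comparator is immaterial, as \<open>a 0 = 0\<close>.\<close>

definition z_prev :: "nat \<Rightarrow> 'a" where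
  "z_prev t = (if t = 1 then z 1 else z (t - 1))"

definition gradient_step :: "nat \<Rightarrow> 'a" where
  "gradient_step t = \<theta> t - \<eta> t *\<^sub>R grad t (\<theta> t)"

lemma D_nonneg: "0 \<le> D"
  using S_bounded \<theta>1 norm_ge_zero order_trans by blast

lemma a_nonneg: "0 \<le> a t"
  using ogd_weight_nonneg l_pos \<gamma>_range by simp

lemma a_le: "a t \<le> l / (1 - \<gamma>)"
  using ogd_weight_le l_pos \<gamma>_range by simp

lemma a_rec: "1 \<le> t \<Longrightarrow> a t = l + \<gamma> * a (t - 1)"
  using \<gamma>_range ogd_weight_Suc[of \<gamma> l "t - 1"] by simp

lemma \<eta>_eq: "\<eta> t = 1 / a t"
  using \<eta>_def by (simp add: ogd_weight_def)

lemma \<theta>_in: "t \<in> {1..T} \<Longrightarrow> \<theta> t \<in> S"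
  using \<theta>1 \<theta>_step by (induction t) (auto simp: le_Suc_eq)

lemma z_prev_in:
  assumes "t \<in> {1..T}"
  shows "z_prev t \<in> S"
proof (cases "t = 1")
  case False
  with assms have "t - 1 \<in> {1..T}"
    by auto
  with False show ?thesis
    using z_in by (simp add: z_prev_def)
qed (use assms z_in in \<open>simp add: z_prev_def\<close>)

lemma round_bound:
  assumes t: "t \<in> {1..T}"
  shows "2 * (f t (\<theta> t) - f t (z t))
      \<le> a (t - 1) * (norm (\<theta> t - z_prev t))\<^sup>2 - a t * (norm (gradient_step t - z t))\<^sup>2
         + (4 * D * l / (1 - \<gamma>) * norm (z t - z_prev t) + \<eta> t * G\<^sup>2)"
proof -
  have "a t = l + \<gamma> * a (t - 1)"
    using t a_rec by simp
  then show ?thesis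
    using ogd_round_bound[OF f_sc[rule_format, OF t] \<theta>_in[OF t] z_in[rule_format, OF t] z_prev_in[OF t]
        S_bounded bspec[OF grad_bound t] _ l_pos _ _ a_nonneg a_le] \<gamma>_range
    by (simp add: gradient_step_def \<eta>_eq)
qed

lemma projection_step:
  assumes t: "t \<in> {1..<T}"
  shows "a t * (norm (\<theta> (Suc t) - z_prev (Suc t)))\<^sup>2 \<le> a t * (norm (gradient_step t - z t))\<^sup>2"
proof -
  have "(norm (\<theta> (Suc t) - z t))\<^sup>2 \<le> (norm (gradient_step t - z t))\<^sup>2"
    using projection_sq_dist_le[OF S_convex S_closed] \<theta>_step t z_in
    by (auto simp: gradient_step_def)
  then show ?thesis
    using t a_nonneg by (simp add: z_prev_def mult_left_mono)
qed

lemma path_length_z_prev: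
  "(\<Sum>t=1..T. norm (z t - z_prev t)) = (\<Sum>t=2..T. norm (z t - z (t - 1)))"
  by (rule sum.mono_neutral_cong_right) (auto simp: z_prev_def)

lemma dynamic_regret:
  "2 * (\<Sum>t=1..T. f t (\<theta> t) - f t (z t))
     \<le> 4 * D * l / (1 - \<gamma>) * (\<Sum>t=2..T. norm (z t - z (t - 1))) + (\<Sum>t=1..T. \<eta> t) * G\<^sup>2"
proof -
  define C where "C = 4 * D * l / (1 - \<gamma>)"
  have "2 * (\<Sum>t=1..T. f t (\<theta> t) - f t (z t))
      \<le> (\<Sum>t=1..T. C * norm (z t - z_prev t) + \<eta> t * G\<^sup>2)"
    unfolding sum_distrib_left C_def
    by (rule sum_le_by_potential[where \<Psi> = "\<lambda>t. a (t - 1) * (norm (\<theta> t - z_prev t))\<^sup>2"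
          and Q = "\<lambda>t. a t * (norm (gradient_step t - z t))\<^sup>2"])
      (use round_bound projection_step a_nonneg in auto)
  also have "\<dots> = C * (\<Sum>t=2..T. norm (z t - z (t - 1))) + (\<Sum>t=1..T. \<eta> t) * G\<^sup>2"
    using path_length_z_prev by (simp add: sum.distrib flip: sum_distrib_left sum_distrib_right)
  finally show ?thesis
    unfolding C_def .
qed

end

theorem theorem3p6:
  fixes S :: "'a::euclidean_space set"
    and f :: "nat \<Rightarrow> 'a \<Rightarrow> real"
    and grad :: "nat \<Rightarrow> 'a \<Rightarrow> 'a"
    and \<theta> z :: "nat \<Rightarrow> 'a"
    and T :: nat
    and D G l \<gamma> V :: real
    and \<eta> :: "nat \<Rightarrow> real"
  assumes S_compact: "compact S"
    and S_convex: "convex S"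
    and S_bounded: "\<forall>x\<in>S. norm x \<le> D"
    and l_pos: "l > 0"
    and f_diff: "\<forall>t\<in>{1..T}. \<forall>x\<in>S. (f t has_derivative (\<lambda>h. grad t x \<bullet> h)) (at x)"
    and f_sc: "\<forall>t\<in>{1..T}. strongly_convex_grad_on S l (f t) (grad t)"
    and grad_bound: "\<forall>t\<in>{1..T}. \<forall>x\<in>S. norm (grad t x) \<le> G"
    and \<gamma>_range: "0 < \<gamma>" "\<gamma> < 1"
    and \<eta>_def: "\<forall>t. \<eta> t = (1 - \<gamma>) / (l * (1 - \<gamma> ^ t))"
    and \<theta>1: "\<theta> 1 \<in> S"
    and \<theta>_step: "\<forall>t\<in>{1..<T}. \<theta> (t + 1) \<in> S \<and>
        (\<forall>y\<in>S. (norm (\<theta> (t + 1) - (\<theta> t - \<eta> t *\<^sub>R grad t (\<theta> t))))\<^sup>2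
                \<le> (norm (y - (\<theta> t - \<eta> t *\<^sub>R grad t (\<theta> t))))\<^sup>2)"
    and z_in: "\<forall>t\<in>{1..T}. z t \<in> S"
    and z_var: "(\<Sum>t=2..T. norm (z t - z (t - 1))) \<le> V"
  shows "(\<Sum>t=1..T. f t (\<theta> t) - f t (z t))
           \<le> 2 * D * l / (1 - \<gamma>) * V + G\<^sup>2 / 2 * (\<Sum>t=1..T. \<eta> t)"
proof -
  interpret ogd_setting S f grad \<theta> z T D G l \<gamma> \<eta>
    using assms compact_imp_closed by unfold_locales auto
  have "0 \<le> 4 * D * l / (1 - \<gamma>)"
    using D_nonneg l_pos \<gamma>_range by simp
  then have "4 * D * l / (1 - \<gamma>) * (\<Sum>t=2..T. norm (z t - z (t - 1))) \<le> 4 * D * l / (1 - \<gamma>) * V"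
    by (rule mult_left_mono[OF z_var])
  then have "2 * (\<Sum>t=1..T. f t (\<theta> t) - f t (z t)) \<le> 4 * D * l / (1 - \<gamma>) * V + (\<Sum>t=1..T. \<eta> t) * G\<^sup>2"
    using dynamic_regret by linarith
  then show ?thesis
    by (simp add: field_simps)
qed

end
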